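(* Let $\kappa>0$ and let $\chi_\kappa$ be the operator on $C^\infty(\mathbb{R})$ given by $$(\chi_\kappa f)(x)=\frac{1}{\Gamma(\kappa)}\int_0^1(1-t)^{\kappa-1}f(tx)\,dt.$$ Then $\chi_\kappa$ is a topological isomorphism from $C^\infty(\mathbb{R})$ onto itself, and its inverse is given for all $f\in C^\infty(\mathbb{R})$ by $$\chi_\kappa^{-1}f(x)=\prod_{j=1}^n\Big(j+x\frac{d}{dx}\Big)\big(I^{\kappa,n-\kappa}f\big)(x),$$ where $n=\lceil\kappa\rceil$ is the smallest integer $\ge\kappa$.
   Context: $C^\infty(\mathbb{R})$ carries the topology defined by the seminorms $\|f\|_{n,a}=\sup_{0\le k\le n,\ x\in[-a,a]}|f^{(k)}(x)|$, $a>0$, $n\in\mathbb{N}$. For $\delta>0$ and $\gamma\in\mathbb{R}$ the Erdélyi–Kober fractional integral is $(I^{\gamma,\delta}f)(x)=\frac{1}{\Gamma(\delta)}\int_0^1(1-t)^{\delta-1}t^\gamma f(tx)\,dt$; for $\delta=0$ (which occurs when $\kappa$ is an integer) $I^{\gamma,0}$ is the identity operator. The product denotes composition of the commuting first-order differential operators $j+x\frac{d}{dx}$. *)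

theory Defs
  imports "HOL-Analysis.Analysis"
begin

definition Cinf :: "(real \<Rightarrow> real) set" where
  "Cinf = {f. \<forall>k x. ((deriv ^^ k) f) differentiable (at x)}"

definition seminorm_na :: "nat \<Rightarrow> real \<Rightarrow> (real \<Rightarrow> real) \<Rightarrow> real" where
  "seminorm_na n a f = Sup {\<bar>(deriv ^^ k) f x\<bar> | k x. k \<le> n \<and> x \<in> {-a..a}}"

definition Ctop :: "(real \<Rightarrow> real) topology" where
  "Ctop = subtopology
     (topology_generated_by
        {{g \<in> Cinf. seminorm_na n a (\<lambda>x. g x - f x) < e} | f n a e.
            f \<in> Cinf \<and> a > 0 \<and> e > 0})
     Cinf"

definition chi :: "real \<Rightarrow> (real \<Rightarrow> real) \<Rightarrow> (real \<Rightarrow> real)" where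
  "chi \<kappa> f = (\<lambda>x. (1 / Gamma \<kappa>) * integral {0..1} (\<lambda>t. (1 - t) powr (\<kappa> - 1) * f (t * x)))"

definition EK :: "real \<Rightarrow> real \<Rightarrow> (real \<Rightarrow> real) \<Rightarrow> (real \<Rightarrow> real)" where
  "EK \<gamma> \<delta> f = (if \<delta> = 0 then f else
     (\<lambda>x. (1 / Gamma \<delta>) * integral {0..1} (\<lambda>t. (1 - t) powr (\<delta> - 1) * t powr \<gamma> * f (t * x))))"

definition Dop :: "nat \<Rightarrow> (real \<Rightarrow> real) \<Rightarrow> (real \<Rightarrow> real)" where
  "Dop j g = (\<lambda>x. real j * g x + x * deriv g x)"

fun Dprod :: "nat \<Rightarrow> (real \<Rightarrow> real) \<Rightarrow> (real \<Rightarrow> real)" where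
  "Dprod 0 g = g"
| "Dprod (Suc n) g = Dop (Suc n) (Dprod n g)"

end

theory Submission
  imports Defs
begin

(*
  Both chi_kappa and I^(kappa, n - kappa) are Hausdorff operators
  f |-> (x |-> integral_0^1 w(t) f(tx) dt) with nonnegative integrable weights w. Such an operator
  multiplies the monomial x^m by the moment integral_0^1 w(t) t^m dt, so by Weierstrass
  approximation two compositions of Hausdorff operators agree as soon as their moment sequences do.
  By the Beta integral, the moments of the two kernels multiply to m!/(n+m)!, the moments of the
  kernel (1-t)^(n-1)/(n-1)!; hence chi_kappa and I^(kappa, n - kappa) compose, in either order, to
  the n-fold iterated integral. Integration by parts shows that the latter inverts the product of
  the operators j + x d/dx, j = 1..n, which commute with every Hausdorff operator. Continuity for
  the topology of C^oo(R) follows from seminorm estimates, since the derivatives of a Hausdorff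
  operator are again Hausdorff operators.
*)

lemma Cinf_higher_deriv:
  assumes "f \<in> Cinf"
  shows "(deriv ^^ k) f \<in> Cinf"
proof -
  have "(deriv ^^ j) ((deriv ^^ k) f) = (deriv ^^ (j + k)) f" for j
    by (simp add: funpow_add)
  with assms show ?thesis
    unfolding Cinf_def by auto
qed

lemma Cinf_deriv: "f \<in> Cinf \<Longrightarrow> deriv f \<in> Cinf"
  using Cinf_higher_deriv[of f 1] by simp

lemma Cinf_differentiable: "f \<in> Cinf \<Longrightarrow> f differentiable (at x)"
  unfolding Cinf_def using funpow_0[of deriv f] by (metis (no_types) mem_Collect_eq)

lemma Cinf_has_real_derivative: "f \<in> Cinf \<Longrightarrow> (f has_real_derivative deriv f x) (at x)"
  using Cinf_differentiable DERIV_deriv_iff_real_differentiable by blast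

lemma Cinf_continuous_on: "f \<in> Cinf \<Longrightarrow> continuous_on S f"
  by (intro continuous_at_imp_continuous_on ballI differentiable_imp_continuous_within
      Cinf_differentiable)

lemma higher_deriv_diff:
  assumes "f \<in> Cinf" "g \<in> Cinf"
  shows "(deriv ^^ k) (\<lambda>x. f x - g x) = (\<lambda>x. (deriv ^^ k) f x - (deriv ^^ k) g x)"
  using assms
proof (induction k arbitrary: f g)
  case (Suc k)
  have "deriv (\<lambda>x. f x - g x) = (\<lambda>x. deriv f x - deriv g x)"
    by (intro ext DERIV_imp_deriv)
      (auto intro!: derivative_eq_intros Cinf_has_real_derivative Suc.prems)
  then show ?case
    using Suc.IH[OF Cinf_deriv[OF Suc.prems(1)] Cinf_deriv[OF Suc.prems(2)]]
    by (simp add: funpow_Suc_right del: funpow.simps)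
qed simp

lemma Cinf_diff: "f \<in> Cinf \<Longrightarrow> g \<in> Cinf \<Longrightarrow> (\<lambda>x. f x - g x) \<in> Cinf"
  unfolding Cinf_def by (simp add: higher_deriv_diff[unfolded Cinf_def])

lemma seminorm_na_bdd_above:
  assumes "f \<in> Cinf"
  shows "bdd_above {\<bar>(deriv ^^ k) f x\<bar> | k x. k \<le> n \<and> x \<in> {-a..a}}"
proof -
  have "{\<bar>(deriv ^^ k) f x\<bar> | k x. k \<le> n \<and> x \<in> {-a..a}}
      = (\<Union>k\<le>n. (\<lambda>x. \<bar>(deriv ^^ k) f x\<bar>) ` {-a..a})"
    by blast
  moreover have "compact ((\<lambda>x. \<bar>(deriv ^^ k) f x\<bar>) ` {-a..a})" for k
    by (intro compact_continuous_image continuous_intros Cinf_continuous_on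
        Cinf_higher_deriv assms) auto
  ultimately show ?thesis
    by (simp add: bounded_imp_bdd_above compact_imp_bounded)
qed

lemma abs_higher_deriv_le_seminorm_na:
  assumes "f \<in> Cinf" "k \<le> n" "x \<in> {-a..a}"
  shows "\<bar>(deriv ^^ k) f x\<bar> \<le> seminorm_na n a f"
  unfolding seminorm_na_def
  by (rule cSup_upper[OF _ seminorm_na_bdd_above[OF assms(1)]]) (use assms in blast)

lemma seminorm_na_le:
  assumes "a \<ge> 0" "\<And>k x. k \<le> n \<Longrightarrow> x \<in> {-a..a} \<Longrightarrow> \<bar>(deriv ^^ k) f x\<bar> \<le> B"
  shows "seminorm_na n a f \<le> B"
  unfolding seminorm_na_def
  by (rule cSup_least) (use assms in \<open>auto intro!: exI[of _ 0]\<close>)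

lemma seminorm_na_nonneg: "f \<in> Cinf \<Longrightarrow> a \<ge> 0 \<Longrightarrow> seminorm_na n a f \<ge> 0"
  using abs_higher_deriv_le_seminorm_na[of f 0 n 0 a] by simp

lemma seminorm_na_zero: "a \<ge> 0 \<Longrightarrow> seminorm_na n a (\<lambda>x. 0) = 0"
proof -
  assume "a \<ge> 0"
  have "(deriv ^^ k) (\<lambda>x. 0::real) = (\<lambda>x. 0)" for k
    by (induction k) auto
  with \<open>a \<ge> 0\<close>
  have "{\<bar>(deriv ^^ k) (\<lambda>x. 0) x\<bar> | k x. k \<le> n \<and> x \<in> {-a..a}} = {0::real}"
    by (auto intro!: exI[of _ 0])
  then show ?thesis
    unfolding seminorm_na_def by simp
qed

lemma seminorm_na_triangle:
  assumes "f \<in> Cinf" "g \<in> Cinf" "h \<in> Cinf" "a \<ge> 0"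
  shows "seminorm_na n a (\<lambda>x. f x - h x)
    \<le> seminorm_na n a (\<lambda>x. f x - g x) + seminorm_na n a (\<lambda>x. g x - h x)"
proof (rule seminorm_na_le[OF assms(4)])
  fix k x assume kx: "k \<le> n" "x \<in> {-a..a}"
  have "\<bar>(deriv ^^ k) (\<lambda>x. f x - h x) x\<bar>
      \<le> \<bar>(deriv ^^ k) (\<lambda>x. f x - g x) x\<bar> + \<bar>(deriv ^^ k) (\<lambda>x. g x - h x) x\<bar>"
    using assms by (simp add: higher_deriv_diff)
  also have "\<dots> \<le> seminorm_na n a (\<lambda>x. f x - g x) + seminorm_na n a (\<lambda>x. g x - h x)"
    by (intro add_mono abs_higher_deriv_le_seminorm_na Cinf_diff assms kx)
  finally show "\<bar>(deriv ^^ k) (\<lambda>x. f x - h x) x\<bar>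
      \<le> seminorm_na n a (\<lambda>x. f x - g x) + seminorm_na n a (\<lambda>x. g x - h x)" .
qed

definition hausdorff_weight :: "(real \<Rightarrow> real) \<Rightarrow> bool" where
  "hausdorff_weight w \<longleftrightarrow> w integrable_on {0..1} \<and> (\<forall>t\<in>{0..1}. 0 \<le> w t)"

definition hausdorff_op :: "(real \<Rightarrow> real) \<Rightarrow> (real \<Rightarrow> real) \<Rightarrow> real \<Rightarrow> real" where
  "hausdorff_op w g x = integral {0..1} (\<lambda>t. w t * g (t * x))"

definition moment :: "(real \<Rightarrow> real) \<Rightarrow> nat \<Rightarrow> real" where
  "moment w m = integral {0..1} (\<lambda>t. w t * t ^ m)"

lemma hausdorff_weight_integral_nonneg: "hausdorff_weight w \<Longrightarrow> integral {0..1} w \<ge> 0"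
  unfolding hausdorff_weight_def by (intro integral_nonneg) auto

lemma weighted_integrable:
  assumes "hausdorff_weight w" "continuous_on {0..1} h"
  shows "(\<lambda>t. w t * h t) integrable_on {0..1}"
proof -
  have "w absolutely_integrable_on {0..1}"
    using assms(1) unfolding hausdorff_weight_def by (intro nonnegative_absolutely_integrable_1) auto
  then have "(\<lambda>t. h t * w t) absolutely_integrable_on {0..1}"
    by (intro absolutely_integrable_bounded_measurable_product_real
        continuous_imp_measurable_on_sets_lebesgue compact_imp_bounded compact_continuous_image
        assms(2)) auto
  then show ?thesis
    by (simp add: absolutely_integrable_on_def mult.commute)
qed

lemma abs_weighted_integral_le:
  assumes "hausdorff_weight w" "continuous_on {0..1} h" "\<And>t. t \<in> {0..1} \<Longrightarrow> \<bar>h t\<bar> \<le> B"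
  shows "\<bar>integral {0..1} (\<lambda>t. w t * h t)\<bar> \<le> integral {0..1} w * B"
proof -
  have "norm (integral {0..1} (\<lambda>t. w t * h t)) \<le> integral {0..1} (\<lambda>t. w t * B)"
  proof (rule integral_norm_bound_integral)
    show "(\<lambda>t. w t * h t) integrable_on {0..1}"
      by (rule weighted_integrable[OF assms(1,2)])
    show "(\<lambda>t. w t * B) integrable_on {0..1}"
      using assms(1) unfolding hausdorff_weight_def by (intro integrable_on_mult_left) auto
    fix t :: real assume t: "t \<in> {0..1}"
    then have "w t \<ge> 0" using assms(1) unfolding hausdorff_weight_def by auto
    then show "norm (w t * h t) \<le> w t * B"
      using assms(3)[OF t] by (simp add: abs_mult mult_left_mono)
  qed
  then show ?thesis by simp
qed

lemma hausdorff_weight_mult_power: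
  assumes "hausdorff_weight w"
  shows "hausdorff_weight (\<lambda>t. w t * t ^ k)"
proof -
  have "continuous_on {0..1} (\<lambda>t::real. t ^ k)"
    by (intro continuous_intros)
  then show ?thesis
    using weighted_integrable[OF assms] assms unfolding hausdorff_weight_def by auto
qed

lemma continuous_on_dilation:
  "continuous_on UNIV g \<Longrightarrow> continuous_on S (\<lambda>t. g (t * x :: real))"
  by (rule continuous_on_compose2[of UNIV g]) (auto intro: continuous_intros)

lemma hausdorff_op_integrable:
  "hausdorff_weight w \<Longrightarrow> continuous_on UNIV g \<Longrightarrow> (\<lambda>t. w t * g (t * x)) integrable_on {0..1}"
  by (intro weighted_integrable continuous_on_dilation)

lemma abs_dilation_le: "t \<in> {0..1} \<Longrightarrow> \<bar>t * x\<bar> \<le> \<bar>x :: real\<bar>"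
  by (simp add: abs_mult mult_left_le_one_le)

lemma uniform_continuity_near_interval:
  fixes g :: "real \<Rightarrow> real"
  assumes "continuous_on UNIV g" "e > 0"
  obtains d where "d > 0" "\<And>y z. \<bar>y\<bar> \<le> r \<Longrightarrow> \<bar>z - y\<bar> < d \<Longrightarrow> \<bar>g z - g y\<bar> < e"
proof -
  have "uniformly_continuous_on {-(r + 1)..r + 1} g"
    by (rule compact_uniformly_continuous) (auto intro: continuous_on_subset[OF assms(1)])
  then obtain d where "d > 0"
    and d: "\<forall>y\<in>{-(r + 1)..r + 1}. \<forall>z\<in>{-(r + 1)..r + 1}. dist z y < d \<longrightarrow> dist (g z) (g y) < e"
    unfolding uniformly_continuous_on_def using assms(2) by metis
  show ?thesis
  proof (rule that[of "min d 1"])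
    fix y z assume "\<bar>y\<bar> \<le> r" "\<bar>z - y\<bar> < min d 1"
    then show "\<bar>g z - g y\<bar> < e"
      using d[rule_format, of y z] by (auto simp: dist_real_def abs_le_iff abs_diff_less_iff)
  qed (use \<open>d > 0\<close> in auto)
qed

lemma hausdorff_op_abs_diff_le:
  assumes "hausdorff_weight w" "continuous_on UNIV f" "continuous_on UNIV g"
    and "\<And>y. \<bar>y\<bar> \<le> \<bar>x\<bar> \<Longrightarrow> \<bar>f y - g y\<bar> \<le> e"
  shows "\<bar>hausdorff_op w f x - hausdorff_op w g x\<bar> \<le> integral {0..1} w * e"
proof -
  have "hausdorff_op w f x - hausdorff_op w g x
      = integral {0..1} (\<lambda>t. w t * (f (t * x) - g (t * x)))"
    unfolding hausdorff_op_def right_diff_distrib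
    by (rule integral_diff[symmetric]) (intro hausdorff_op_integrable assms)+
  also have "\<bar>\<dots>\<bar> \<le> integral {0..1} w * e"
    by (intro abs_weighted_integral_le assms continuous_intros continuous_on_dilation
        abs_dilation_le)
  finally show ?thesis .
qed

lemma continuous_on_hausdorff_op:
  assumes w: "hausdorff_weight w" and g: "continuous_on UNIV g"
  shows "continuous_on S (hausdorff_op w g)"
proof (intro continuous_at_imp_continuous_on ballI, unfold continuous_at_eps_delta, intro allI impI)
  fix x e :: real assume "e > 0"
  define I where "I = integral {0..1} w"
  have "I \<ge> 0"
    unfolding I_def by (rule hausdorff_weight_integral_nonneg[OF w])
  then obtain d where "d > 0"
    and d: "\<And>y z. \<bar>y\<bar> \<le> \<bar>x\<bar> \<Longrightarrow> \<bar>z - y\<bar> < d \<Longrightarrow> \<bar>g z - g y\<bar> < e / (I + 1)"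
    using uniform_continuity_near_interval[OF g, of "e / (I + 1)"] \<open>e > 0\<close> by auto
  have "\<bar>hausdorff_op w g y - hausdorff_op w g x\<bar> < e" if "dist y x < d" for y
  proof -
    have "hausdorff_op w g y - hausdorff_op w g x
        = integral {0..1} (\<lambda>t. w t * (g (t * y) - g (t * x)))"
      unfolding hausdorff_op_def right_diff_distrib
      by (rule integral_diff[symmetric]) (intro hausdorff_op_integrable w g)+
    also have "\<bar>\<dots>\<bar> \<le> I * (e / (I + 1))"
    proof -
      have "\<bar>g (t * y) - g (t * x)\<bar> \<le> e / (I + 1)" if "t \<in> {0..1}" for t
        using abs_dilation_le[OF that, of x] abs_dilation_le[OF that, of "y - x"] \<open>dist y x < d\<close>
        by (intro less_imp_le[OF d]) (auto simp: dist_real_def algebra_simps)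
      then show ?thesis
        unfolding I_def by (intro abs_weighted_integral_le w continuous_intros continuous_on_dilation g)
    qed
    also have "\<dots> < e"
      using \<open>I \<ge> 0\<close> \<open>e > 0\<close> by (simp add: field_simps)
    finally show ?thesis .
  qed
  then show "\<exists>d>0. \<forall>y. dist y x < d \<longrightarrow> dist (hausdorff_op w g y) (hausdorff_op w g x) < e"
    using \<open>d > 0\<close> by (auto simp: dist_real_def)
qed

lemma mvt_remainder_bound:
  fixes g g' :: "real \<Rightarrow> real"
  assumes "\<And>z. (g has_real_derivative g' z) (at z)"
    and "\<And>z. \<bar>z - y\<bar> \<le> \<bar>u\<bar> \<Longrightarrow> \<bar>g' z - g' y\<bar> \<le> e"
  shows "\<bar>g (y + u) - g y - u * g' y\<bar> \<le> \<bar>u\<bar> * e"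
proof -
  have "norm ((\<lambda>z. g z - z * g' y) (y + u) - (\<lambda>z. g z - z * g' y) y) \<le> e * norm (y + u - y)"
  proof (rule field_differentiable_bound[of "cball y \<bar>u\<bar>"])
    fix z assume "z \<in> cball y \<bar>u\<bar>"
    then show "norm (g' z - g' y) \<le> e"
      unfolding real_norm_def by (intro assms(2)) (simp add: dist_real_def abs_minus_commute)
    show "((\<lambda>z. g z - z * g' y) has_field_derivative g' z - g' y) (at z within cball y \<bar>u\<bar>)"
      by (rule has_field_derivative_at_within) (auto intro!: derivative_eq_intros assms(1))
  qed (auto simp: dist_real_def)
  then show ?thesis
    by (simp add: algebra_simps)
qed

lemma hausdorff_op_difference_quotient:
  assumes w: "hausdorff_weight w" and g: "continuous_on UNIV g" and g': "continuous_on UNIV g'"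
  shows "(hausdorff_op w g (x + h) - hausdorff_op w g x) / h - hausdorff_op (\<lambda>t. w t * t) g' x
    = integral {0..1} (\<lambda>t. w t * ((g (t * (x + h)) - g (t * x)) / h - t * g' (t * x)))"
proof -
  have "hausdorff_weight (\<lambda>t. w t * t)"
    using hausdorff_weight_mult_power[OF w, of 1] by simp
  then have a1: "(\<lambda>t. w t * g (t * (x + h))) integrable_on {0..1}"
    and a0: "(\<lambda>t. w t * g (t * x)) integrable_on {0..1}"
    and b: "(\<lambda>t. w t * t * g' (t * x)) integrable_on {0..1}"
    by (intro hausdorff_op_integrable w g g')+
  have "integral {0..1} (\<lambda>t. w t * ((g (t * (x + h)) - g (t * x)) / h - t * g' (t * x)))
      = integral {0..1} (\<lambda>t. (w t * g (t * (x + h)) - w t * g (t * x)) / h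
          - w t * t * g' (t * x))"
    by (simp add: algebra_simps diff_divide_distrib)
  also have "\<dots> = integral {0..1} (\<lambda>t. (w t * g (t * (x + h)) - w t * g (t * x)) / h)
      - integral {0..1} (\<lambda>t. w t * t * g' (t * x))"
    by (intro integral_diff integrable_on_divide integrable_diff a1 a0 b)
  also have "integral {0..1} (\<lambda>t. (w t * g (t * (x + h)) - w t * g (t * x)) / h)
      = (hausdorff_op w g (x + h) - hausdorff_op w g x) / h"
    unfolding integral_divide integral_diff[OF a1 a0] hausdorff_op_def ..
  finally show ?thesis
    by (simp add: hausdorff_op_def)
qed

lemma hausdorff_op_has_real_derivative:
  assumes w: "hausdorff_weight w"
    and g': "\<And>z. (g has_real_derivative g' z) (at z)" "continuous_on UNIV g'"
  shows "(hausdorff_op w g has_real_derivative hausdorff_op (\<lambda>t. w t * t) g' x) (at x)"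
  unfolding DERIV_def
proof (rule LIM_I)
  fix r :: real assume "r > 0"
  define I where "I = integral {0..1} w"
  have "I \<ge> 0"
    unfolding I_def by (rule hausdorff_weight_integral_nonneg[OF w])
  define e where "e = r / (I + 1)"
  have "e > 0"
    using \<open>r > 0\<close> \<open>I \<ge> 0\<close> by (simp add: e_def)
  then obtain d where "d > 0"
    and d: "\<And>y z. \<bar>y\<bar> \<le> \<bar>x\<bar> \<Longrightarrow> \<bar>z - y\<bar> < d \<Longrightarrow> \<bar>g' z - g' y\<bar> < e"
    using uniform_continuity_near_interval[OF g'(2)] by metis
  have g: "continuous_on UNIV g"
    using g'(1) by (meson DERIV_isCont continuous_at_imp_continuous_on)
  have "norm ((hausdorff_op w g (x + h) - hausdorff_op w g x) / h
      - hausdorff_op (\<lambda>t. w t * t) g' x) < r" if "h \<noteq> 0" "\<bar>h\<bar> < d" for h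
  proof -
    have "\<bar>(g (t * (x + h)) - g (t * x)) / h - t * g' (t * x)\<bar> \<le> e" if t: "t \<in> {0..1}" for t
    proof -
      have "\<bar>g (t * x + t * h) - g (t * x) - t * h * g' (t * x)\<bar> \<le> \<bar>t * h\<bar> * e"
        using abs_dilation_le[OF t, of x] abs_dilation_le[OF t, of h] \<open>\<bar>h\<bar> < d\<close>
        by (intro mvt_remainder_bound g'(1) less_imp_le[OF d]) auto
      moreover have "(g (t * (x + h)) - g (t * x)) / h - t * g' (t * x)
          = (g (t * x + t * h) - g (t * x) - t * h * g' (t * x)) / h"
        using \<open>h \<noteq> 0\<close> by (simp add: field_simps distrib_left)
      ultimately have "\<bar>(g (t * (x + h)) - g (t * x)) / h - t * g' (t * x)\<bar> \<le> \<bar>t\<bar> * e"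
        using \<open>h \<noteq> 0\<close> by (simp add: abs_divide abs_mult divide_le_eq mult_ac)
      also have "\<dots> \<le> e"
        using t \<open>e > 0\<close> by (simp add: mult_left_le_one_le)
      finally show ?thesis .
    qed
    then have "\<bar>integral {0..1} (\<lambda>t. w t * ((g (t * (x + h)) - g (t * x)) / h - t * g' (t * x)))\<bar>
        \<le> I * e"
      unfolding I_def
      by (intro abs_weighted_integral_le w continuous_intros continuous_on_dilation g g'(2))
        (use \<open>h \<noteq> 0\<close> in auto)
    also have "\<dots> < r"
      using \<open>r > 0\<close> \<open>I \<ge> 0\<close> by (simp add: e_def field_simps)
    finally show ?thesis
      by (simp add: hausdorff_op_difference_quotient w g g'(2))
  qed
  then show "\<exists>s>0. \<forall>h. h \<noteq> 0 \<and> norm (h - 0) < s \<longrightarrow>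
      norm ((hausdorff_op w g (x + h) - hausdorff_op w g x) / h - hausdorff_op (\<lambda>t. w t * t) g' x) < r"
    using \<open>d > 0\<close> by auto
qed

lemma deriv_hausdorff_op:
  "hausdorff_weight w \<Longrightarrow> g \<in> Cinf
    \<Longrightarrow> deriv (hausdorff_op w g) = hausdorff_op (\<lambda>t. w t * t) (deriv g)"
  by (intro ext DERIV_imp_deriv hausdorff_op_has_real_derivative Cinf_has_real_derivative
      Cinf_continuous_on Cinf_deriv)

lemma higher_deriv_hausdorff_op:
  assumes "hausdorff_weight w" "f \<in> Cinf"
  shows "(deriv ^^ k) (hausdorff_op w f) = hausdorff_op (\<lambda>t. w t * t ^ k) ((deriv ^^ k) f)"
  using assms
proof (induction k arbitrary: w f)
  case (Suc k)
  have "hausdorff_weight (\<lambda>t. w t * t)"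
    using hausdorff_weight_mult_power[OF Suc.prems(1), of 1] by simp
  from Suc.IH[OF this Cinf_deriv[OF Suc.prems(2)]] show ?case
    by (simp add: funpow_Suc_right deriv_hausdorff_op Suc.prems mult_ac del: funpow.simps)
qed simp

lemma hausdorff_op_Cinf:
  assumes "hausdorff_weight w" "f \<in> Cinf"
  shows "hausdorff_op w f \<in> Cinf"
  unfolding Cinf_def mem_Collect_eq higher_deriv_hausdorff_op[OF assms]
proof (intro allI)
  fix k x
  have fk: "(deriv ^^ k) f \<in> Cinf"
    by (rule Cinf_higher_deriv[OF assms(2)])
  show "hausdorff_op (\<lambda>t. w t * t ^ k) ((deriv ^^ k) f) differentiable at x"
    using hausdorff_op_has_real_derivative[OF hausdorff_weight_mult_power[OF assms(1)]
        Cinf_has_real_derivative[OF fk] Cinf_continuous_on[OF Cinf_deriv[OF fk]]]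
    by (auto simp: real_differentiable_def)
qed

lemma seminorm_na_hausdorff_op_le:
  assumes "hausdorff_weight w" "f \<in> Cinf" "a \<ge> 0"
  shows "seminorm_na n a (hausdorff_op w f) \<le> integral {0..1} w * seminorm_na n a f"
proof (rule seminorm_na_le[OF assms(3)])
  fix k x assume kx: "k \<le> n" "x \<in> {-a..a}"
  have "\<bar>t ^ k * (deriv ^^ k) f (t * x)\<bar> \<le> seminorm_na n a f" if t: "t \<in> {0..1}" for t
  proof -
    have "\<bar>t ^ k\<bar> \<le> 1"
      using t by (simp add: abs_le_iff power_le_one)
    moreover have "t * x \<in> {-a..a}"
      using abs_dilation_le[OF t, of x] kx(2) by (auto simp: abs_le_iff)
    then have "\<bar>(deriv ^^ k) f (t * x)\<bar> \<le> seminorm_na n a f"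
      by (rule abs_higher_deriv_le_seminorm_na[OF assms(2) kx(1)])
    ultimately show ?thesis
      using mult_mono[of "\<bar>t ^ k\<bar>" 1] by (simp add: abs_mult)
  qed
  then have "\<bar>integral {0..1} (\<lambda>t. w t * (t ^ k * (deriv ^^ k) f (t * x)))\<bar>
      \<le> integral {0..1} w * seminorm_na n a f"
    by (intro abs_weighted_integral_le assms(1) continuous_intros continuous_on_dilation
        Cinf_continuous_on Cinf_higher_deriv assms(2))
  then show "\<bar>(deriv ^^ k) (hausdorff_op w f) x\<bar> \<le> integral {0..1} w * seminorm_na n a f"
    by (simp add: higher_deriv_hausdorff_op[OF assms(1,2)] hausdorff_op_def mult.assoc)
qed

lemma hausdorff_op_diff:
  assumes "hausdorff_weight w" "continuous_on UNIV f" "continuous_on UNIV g"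
  shows "hausdorff_op w (\<lambda>x. f x - g x) = (\<lambda>x. hausdorff_op w f x - hausdorff_op w g x)"
  unfolding hausdorff_op_def right_diff_distrib
  by (intro ext integral_diff hausdorff_op_integrable assms)

lemma hausdorff_op_add:
  assumes "hausdorff_weight w" "continuous_on UNIV f" "continuous_on UNIV g"
  shows "hausdorff_op w (\<lambda>x. f x + g x) = (\<lambda>x. hausdorff_op w f x + hausdorff_op w g x)"
  unfolding hausdorff_op_def distrib_left
  by (intro ext integral_add hausdorff_op_integrable assms)

lemma hausdorff_op_cmult: "hausdorff_op w (\<lambda>x. c * f x) = (\<lambda>x. c * hausdorff_op w f x)"
  unfolding hausdorff_op_def by (simp add: mult.left_commute)

lemma deriv_Dop:
  assumes "\<And>x. G differentiable (at x)" "\<And>x. deriv G differentiable (at x)"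
  shows "deriv (Dop j G) = Dop (Suc j) (deriv G)"
proof
  fix x
  have "(Dop j G has_real_derivative
      real j * deriv G x + (x * deriv (deriv G) x + 1 * deriv G x)) (at x)"
    unfolding Dop_def using assms
    by (intro DERIV_add DERIV_cmult DERIV_mult' DERIV_ident)
      (auto simp: DERIV_deriv_iff_real_differentiable)
  then show "deriv (Dop j G) x = Dop (Suc j) (deriv G) x"
    unfolding Dop_def by (simp add: DERIV_imp_deriv algebra_simps)
qed

lemma higher_deriv_Dop:
  assumes "g \<in> Cinf"
  shows "(deriv ^^ k) (Dop j g) = Dop (j + k) ((deriv ^^ k) g)"
  using assms
proof (induction k arbitrary: j g)
  case (Suc k)
  have "deriv (Dop j g) = Dop (Suc j) (deriv g)"
    by (intro deriv_Dop Cinf_differentiable Cinf_deriv Suc.prems)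
  with Suc.IH[OF Cinf_deriv[OF Suc.prems]] show ?case
    by (simp add: funpow_Suc_right del: funpow.simps)
qed simp

lemma Dop_Cinf:
  assumes "g \<in> Cinf"
  shows "Dop j g \<in> Cinf"
  unfolding Cinf_def mem_Collect_eq higher_deriv_Dop[OF assms]
proof (intro allI)
  fix k x
  have gk: "(deriv ^^ k) g \<in> Cinf"
    by (rule Cinf_higher_deriv[OF assms])
  show "Dop (j + k) ((deriv ^^ k) g) differentiable at x"
    unfolding Dop_def
    by (intro differentiable_add differentiable_mult differentiable_const differentiable_ident
        Cinf_differentiable[OF gk] Cinf_differentiable[OF Cinf_deriv[OF gk]])
qed

lemma seminorm_na_Dop_le:
  assumes "g \<in> Cinf" "a \<ge> 0"
  shows "seminorm_na n a (Dop j g) \<le> (real j + real n + a) * seminorm_na (Suc n) a g"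
proof (rule seminorm_na_le[OF assms(2)])
  fix k x assume kx: "k \<le> n" "x \<in> {-a..a}"
  define S where "S = seminorm_na (Suc n) a g"
  have "S \<ge> 0"
    unfolding S_def by (rule seminorm_na_nonneg[OF assms])
  have "\<bar>(deriv ^^ k) g x\<bar> \<le> S" "\<bar>(deriv ^^ Suc k) g x\<bar> \<le> S"
    unfolding S_def using kx by (intro abs_higher_deriv_le_seminorm_na assms(1); simp)+
  moreover have "\<bar>x\<bar> \<le> a"
    using kx by auto
  moreover have "\<bar>(deriv ^^ k) (Dop j g) x\<bar>
      \<le> real (j + k) * \<bar>(deriv ^^ k) g x\<bar> + \<bar>x\<bar> * \<bar>(deriv ^^ Suc k) g x\<bar>"
    by (subst higher_deriv_Dop[OF assms(1)])
      (simp add: Dop_def abs_mult abs_triangle_ineq[THEN order_trans])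
  ultimately have "\<bar>(deriv ^^ k) (Dop j g) x\<bar> \<le> real (j + k) * S + a * S"
    using \<open>S \<ge> 0\<close> by (smt (verit) mult_mono of_nat_0_le_iff)
  also have "\<dots> \<le> (real j + real n + a) * S"
    using kx \<open>S \<ge> 0\<close> by (simp add: algebra_simps mult_left_mono)
  finally show "\<bar>(deriv ^^ k) (Dop j g) x\<bar> \<le> (real j + real n + a) * S" .
qed

lemma Dop_diff:
  assumes "f \<in> Cinf" "g \<in> Cinf"
  shows "Dop j (\<lambda>x. f x - g x) = (\<lambda>x. Dop j f x - Dop j g x)"
  using higher_deriv_diff[OF assms, of 1] unfolding Dop_def by (simp add: algebra_simps)

lemma Dprod_Cinf: "g \<in> Cinf \<Longrightarrow> Dprod m g \<in> Cinf"
  by (induction m) (auto intro: Dop_Cinf)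

lemma hausdorff_op_Dop:
  assumes w: "hausdorff_weight w" and g: "g \<in> Cinf"
  shows "hausdorff_op w (Dop j g) = Dop j (hausdorff_op w g)"
proof
  fix x
  have "hausdorff_weight (\<lambda>t. w t * t)"
    using hausdorff_weight_mult_power[OF w, of 1] by simp
  then have i1: "(\<lambda>t. real j * (w t * g (t * x))) integrable_on {0..1}"
    and i2: "(\<lambda>t. x * (w t * t * deriv g (t * x))) integrable_on {0..1}"
    by (intro integrable_on_mult_right hausdorff_op_integrable w Cinf_continuous_on Cinf_deriv g)+
  have "hausdorff_op w (Dop j g) x
      = integral {0..1} (\<lambda>t. real j * (w t * g (t * x)) + x * (w t * t * deriv g (t * x)))"
    unfolding hausdorff_op_def Dop_def by (simp add: algebra_simps)
  also have "\<dots> = Dop j (hausdorff_op w g) x"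
    by (simp add: integral_add[OF i1 i2] Dop_def deriv_hausdorff_op[OF w g] hausdorff_op_def)
  finally show "hausdorff_op w (Dop j g) x = Dop j (hausdorff_op w g) x" .
qed

lemma hausdorff_op_Dprod:
  "hausdorff_weight w \<Longrightarrow> g \<in> Cinf \<Longrightarrow> hausdorff_op w (Dprod m g) = Dprod m (hausdorff_op w g)"
  by (induction m) (simp_all add: hausdorff_op_Dop Dprod_Cinf)

definition taylor_kernel :: "nat \<Rightarrow> real \<Rightarrow> real" where
  "taylor_kernel m t = (1 - t) ^ m / fact m"

lemma hausdorff_weight_taylor_kernel: "hausdorff_weight (taylor_kernel m)"
  unfolding hausdorff_weight_def taylor_kernel_def
  by (auto intro!: integrable_continuous_real continuous_intros)

lemma taylor_kernel_has_real_derivative: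
  "(taylor_kernel (Suc m) has_real_derivative - taylor_kernel m t) (at t)"
  unfolding taylor_kernel_def[abs_def]
  by (rule derivative_eq_intros refl | simp)+

lemma taylor_kernel_Suc: "real (Suc m) * taylor_kernel (Suc m) t = (1 - t) * taylor_kernel m t"
  unfolding taylor_kernel_def by (simp add: fact_Suc field_simps del: of_nat_Suc)

lemma dilation_has_real_derivative:
  "(\<And>z. g differentiable (at z))
    \<Longrightarrow> ((\<lambda>t. g (t * x)) has_real_derivative deriv g (t * x) * x) (at t)"
  by (rule DERIV_chain2[of g]) (auto intro!: derivative_eq_intros
      simp: DERIV_deriv_iff_real_differentiable)

lemma hausdorff_op_taylor_kernel_0_Dop:
  assumes "\<And>z. g differentiable (at z)"
  shows "hausdorff_op (taylor_kernel 0) (Dop 1 g) x = g x"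
proof -
  have "((\<lambda>t. t * g (t * x)) has_real_derivative taylor_kernel 0 t * Dop 1 g (t * x)) (at t)" for t
    unfolding taylor_kernel_def Dop_def
    by (rule derivative_eq_intros dilation_has_real_derivative assms refl | simp add: algebra_simps)+
  then have "((\<lambda>t. taylor_kernel 0 t * Dop 1 g (t * x)) has_integral g x) {0..1}"
    using fundamental_theorem_of_calculus[of 0 1 "\<lambda>t. t * g (t * x)"]
    by (simp add: has_real_derivative_iff_has_vector_derivative[symmetric]
        has_field_derivative_at_within)
  then show ?thesis
    unfolding hausdorff_op_def by (rule integral_unique)
qed

lemma hausdorff_op_taylor_kernel_Suc_Dop:
  assumes g: "\<And>z. g differentiable (at z)"
  shows "hausdorff_op (taylor_kernel (Suc m)) (Dop (Suc (Suc m)) g) x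
    = hausdorff_op (taylor_kernel m) g x"
proof -
  define F where "F t = taylor_kernel (Suc m) t * (t * g (t * x))" for t
  \<comment> \<open>F' is the difference of the two integrands and F vanishes at 0 and 1.\<close>
  have "(F has_real_derivative
      taylor_kernel (Suc m) t * Dop (Suc (Suc m)) g (t * x) - taylor_kernel m t * g (t * x)) (at t)"
    for t
  proof -
    have "(F has_real_derivative taylor_kernel (Suc m) t * (t * (deriv g (t * x) * x) + g (t * x))
        - taylor_kernel m t * (t * g (t * x))) (at t)"
      unfolding F_def
      by (rule derivative_eq_intros taylor_kernel_has_real_derivative
          dilation_has_real_derivative g refl | simp add: algebra_simps)+
    moreover have "taylor_kernel (Suc m) t * Dop (Suc (Suc m)) g (t * x) - taylor_kernel m t * g (t * x)
        = taylor_kernel (Suc m) t * (t * (deriv g (t * x) * x) + g (t * x))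
          - taylor_kernel m t * (t * g (t * x))"
    proof -
      have "real (Suc m) * taylor_kernel (Suc m) t * g (t * x)
          = (1 - t) * taylor_kernel m t * g (t * x)"
        by (simp only: taylor_kernel_Suc)
      then show ?thesis
        unfolding Dop_def by (simp add: algebra_simps)
    qed
    ultimately show ?thesis
      by simp
  qed
  then have ibp: "((\<lambda>t. taylor_kernel (Suc m) t * Dop (Suc (Suc m)) g (t * x)
      - taylor_kernel m t * g (t * x)) has_integral 0) {0..1}"
    using fundamental_theorem_of_calculus[of 0 1 F]
    by (simp add: F_def taylor_kernel_def has_real_derivative_iff_has_vector_derivative[symmetric]
        has_field_derivative_at_within)
  have "((\<lambda>t. taylor_kernel m t * g (t * x))
      has_integral hausdorff_op (taylor_kernel m) g x) {0..1}"
    unfolding hausdorff_op_def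
    by (intro integrable_integral hausdorff_op_integrable hausdorff_weight_taylor_kernel
        continuous_at_imp_continuous_on differentiable_imp_continuous_within g ballI)
  from has_integral_add[OF ibp this]
  have "((\<lambda>t. taylor_kernel (Suc m) t * Dop (Suc (Suc m)) g (t * x))
      has_integral hausdorff_op (taylor_kernel m) g x) {0..1}"
    by simp
  then show ?thesis
    unfolding hausdorff_op_def[of "taylor_kernel (Suc m)"] by (rule integral_unique)
qed

lemma hausdorff_op_taylor_kernel_Dprod:
  assumes "g \<in> Cinf"
  shows "hausdorff_op (taylor_kernel m) (Dprod (Suc m) g) = g"
proof (induction m)
  case 0
  show ?case
    using hausdorff_op_taylor_kernel_0_Dop[OF Cinf_differentiable[OF assms]] by auto
next
  case (Suc m)
  have "\<And>z. Dprod (Suc m) g differentiable (at z)"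
    by (intro Cinf_differentiable Dprod_Cinf assms)
  with Suc.IH show ?case
    by (simp only: Dprod.simps flip: hausdorff_op_taylor_kernel_Suc_Dop)
qed

lemma Dprod_hausdorff_op_taylor_kernel:
  assumes "g \<in> Cinf"
  shows "Dprod (Suc m) (hausdorff_op (taylor_kernel m) g) = g"
  using hausdorff_op_Dprod[OF hausdorff_weight_taylor_kernel[of m] assms, of "Suc m"]
    hausdorff_op_taylor_kernel_Dprod[OF assms]
  by simp

lemma hausdorff_op_polynomial:
  assumes "hausdorff_weight w"
  shows "hausdorff_op w (\<lambda>y. \<Sum>i\<le>N. a i * y ^ i) = (\<lambda>x. \<Sum>i\<le>N. a i * moment w i * x ^ i)"
proof
  fix x
  have "hausdorff_op w (\<lambda>y. \<Sum>i\<le>N. a i * y ^ i) x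
      = integral {0..1} (\<lambda>t. \<Sum>i\<le>N. a i * x ^ i * (w t * t ^ i))"
    unfolding hausdorff_op_def by (simp add: sum_distrib_left power_mult_distrib mult_ac)
  also have "\<dots> = (\<Sum>i\<le>N. a i * x ^ i * moment w i)"
    unfolding moment_def using hausdorff_weight_mult_power[OF assms]
    by (subst integral_sum) (auto simp: hausdorff_weight_def intro!: integrable_on_mult_right)
  finally show "hausdorff_op w (\<lambda>y. \<Sum>i\<le>N. a i * y ^ i) x = (\<Sum>i\<le>N. a i * moment w i * x ^ i)"
    by (simp add: mult_ac)
qed

lemma hausdorff_op_compose_polynomial:
  assumes "hausdorff_weight w1" "hausdorff_weight w2" "hausdorff_weight w3"
    and "\<And>m. moment w1 m * moment w2 m = moment w3 m"
  shows "hausdorff_op w1 (hausdorff_op w2 (\<lambda>y. \<Sum>i\<le>N. a i * y ^ i))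
    = hausdorff_op w3 (\<lambda>y. \<Sum>i\<le>N. a i * y ^ i)"
proof -
  have "hausdorff_op w1 (hausdorff_op w2 (\<lambda>y. \<Sum>i\<le>N. a i * y ^ i))
      = (\<lambda>x. \<Sum>i\<le>N. a i * moment w2 i * moment w1 i * x ^ i)"
    using hausdorff_op_polynomial[OF assms(1), of "\<lambda>i. a i * moment w2 i" N]
    by (simp add: hausdorff_op_polynomial[OF assms(2)])
  also have "\<dots> = (\<lambda>x. \<Sum>i\<le>N. a i * moment w3 i * x ^ i)"
    by (simp add: mult.assoc mult.left_commute[of "moment w2 _"] flip: assms(4))
  finally show ?thesis
    by (simp add: hausdorff_op_polynomial[OF assms(3)])
qed

lemma hausdorff_op_compose_eq:
  assumes w1: "hausdorff_weight w1" and w2: "hausdorff_weight w2" and w3: "hausdorff_weight w3"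
    and moments: "\<And>m. moment w1 m * moment w2 m = moment w3 m"
    and h: "continuous_on UNIV h"
  shows "hausdorff_op w1 (hausdorff_op w2 h) = hausdorff_op w3 h"
proof
  fix x
  define I1 I2 I3 where "I1 = integral {0..1} w1" and "I2 = integral {0..1} w2"
    and "I3 = integral {0..1} w3"
  have "I1 \<ge> 0" "I2 \<ge> 0" "I3 \<ge> 0"
    unfolding I1_def I2_def I3_def by (simp_all add: hausdorff_weight_integral_nonneg w1 w2 w3)
  have "\<bar>hausdorff_op w1 (hausdorff_op w2 h) x - hausdorff_op w3 h x\<bar> \<le> (I1 * I2 + I3) * e"
    if "e > 0" for e
  proof -
    obtain p where "real_polynomial_function p"
      and p: "\<And>y. y \<in> {-\<bar>x\<bar>..\<bar>x\<bar>} \<Longrightarrow> \<bar>h y - p y\<bar> < e"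
      using Stone_Weierstrass_real_polynomial_function[of "{-\<bar>x\<bar>..\<bar>x\<bar>}" h e]
        continuous_on_subset[OF h] \<open>e > 0\<close> by auto
    then obtain a N where p_eq: "p = (\<lambda>y. \<Sum>i\<le>N. a i * y ^ i)"
      using real_polynomial_function_iff_sum by blast
    have pc: "continuous_on UNIV p"
      unfolding p_eq by (intro continuous_intros)
    have close: "\<bar>h y - p y\<bar> \<le> e" if "\<bar>y\<bar> \<le> \<bar>x\<bar>" for y
      using p[of y] that by (auto simp: abs_le_iff)
    have "\<bar>hausdorff_op w2 h y - hausdorff_op w2 p y\<bar> \<le> I2 * e" if "\<bar>y\<bar> \<le> \<bar>x\<bar>" for y
      unfolding I2_def using that by (intro hausdorff_op_abs_diff_le w2 h pc close) auto
    then have "\<bar>hausdorff_op w1 (hausdorff_op w2 h) x - hausdorff_op w1 (hausdorff_op w2 p) x\<bar>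
        \<le> I1 * (I2 * e)"
      unfolding I1_def by (intro hausdorff_op_abs_diff_le w1 continuous_on_hausdorff_op w2 h pc)
    moreover have "\<bar>hausdorff_op w3 h x - hausdorff_op w3 p x\<bar> \<le> I3 * e"
      unfolding I3_def by (intro hausdorff_op_abs_diff_le w3 h pc close)
    moreover have "hausdorff_op w1 (hausdorff_op w2 p) x = hausdorff_op w3 p x"
      unfolding p_eq by (simp only: hausdorff_op_compose_polynomial[OF w1 w2 w3 moments])
    ultimately show ?thesis
      by (simp add: algebra_simps)
  qed
  note bound = this
  have "\<bar>hausdorff_op w1 (hausdorff_op w2 h) x - hausdorff_op w3 h x\<bar> \<le> 0 + e" if "e > 0" for e
  proof -
    define C where "C = I1 * I2 + I3 + 1"
    have "C > 0"
      using \<open>I1 \<ge> 0\<close> \<open>I2 \<ge> 0\<close> \<open>I3 \<ge> 0\<close> by (simp add: C_def add_nonneg_pos)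
    with bound[of "e / C"] \<open>e > 0\<close>
    have "\<bar>hausdorff_op w1 (hausdorff_op w2 h) x - hausdorff_op w3 h x\<bar> \<le> (C - 1) * (e / C)"
      by (simp add: C_def)
    also have "\<dots> \<le> e"
      using \<open>C > 0\<close> \<open>e > 0\<close> by (simp add: field_simps)
    finally show ?thesis
      by simp
  qed
  then have "\<bar>hausdorff_op w1 (hausdorff_op w2 h) x - hausdorff_op w3 h x\<bar> \<le> 0"
    by (rule field_le_epsilon)
  then show "hausdorff_op w1 (hausdorff_op w2 h) x = hausdorff_op w3 h x"
    by simp
qed

definition EK_kernel :: "real \<Rightarrow> real \<Rightarrow> real \<Rightarrow> real" where
  "EK_kernel \<gamma> \<delta> t = (1 - t) powr (\<delta> - 1) * t powr \<gamma> / Gamma \<delta>"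

lemma EK_eq_hausdorff_op: "\<delta> \<noteq> 0 \<Longrightarrow> EK \<gamma> \<delta> f = hausdorff_op (EK_kernel \<gamma> \<delta>) f"
  by (simp add: EK_def hausdorff_op_def EK_kernel_def fun_eq_iff flip: integral_divide)

text \<open>The two sides differ only at t = 0, where 0 powr 0 = 0.\<close>
lemma chi_eq_hausdorff_op: "chi \<kappa> f = hausdorff_op (EK_kernel 0 \<kappa>) f"
proof
  fix x
  have "hausdorff_op (EK_kernel 0 \<kappa>) f x
      = integral {0..1} (\<lambda>t. 1 / Gamma \<kappa> * ((1 - t) powr (\<kappa> - 1) * f (t * x)))"
    unfolding hausdorff_op_def by (rule integral_spike[of "{0}"]) (auto simp: EK_kernel_def)
  then show "chi \<kappa> f x = hausdorff_op (EK_kernel 0 \<kappa>) f x"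
    by (simp add: chi_def)
qed

lemma EK_kernel_power_has_integral:
  assumes "\<gamma> > -1" "\<delta> > 0"
  shows "((\<lambda>t. EK_kernel \<gamma> \<delta> t * t ^ m)
    has_integral Gamma (\<gamma> + real m + 1) / Gamma (\<gamma> + \<delta> + real m + 1)) {0..1}"
proof -
  have "((\<lambda>t. t powr (\<gamma> + real m + 1 - 1) * (1 - t) powr (\<delta> - 1) / Gamma \<delta>)
      has_integral Beta (\<gamma> + real m + 1) \<delta> / Gamma \<delta>) {0..1}"
    using assms by (intro has_integral_divide has_integral_Beta_real) auto
  also have "Beta (\<gamma> + real m + 1) \<delta> / Gamma \<delta>
      = Gamma (\<gamma> + real m + 1) / Gamma (\<gamma> + \<delta> + real m + 1)"
    using Gamma_real_pos[OF assms(2)] unfolding Beta_def by (simp add: field_simps add_ac)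
  finally have Beta_integral:
    "((\<lambda>t. t powr (\<gamma> + real m + 1 - 1) * (1 - t) powr (\<delta> - 1) / Gamma \<delta>)
      has_integral Gamma (\<gamma> + real m + 1) / Gamma (\<gamma> + \<delta> + real m + 1)) {0..1}" .
  show ?thesis
  proof (rule has_integral_spike_finite_eq[of "{0}", THEN iffD1, OF _ _ Beta_integral])
    fix t :: real assume "t \<in> {0..1} - {0}"
    then show "EK_kernel \<gamma> \<delta> t * t ^ m
        = t powr (\<gamma> + real m + 1 - 1) * (1 - t) powr (\<delta> - 1) / Gamma \<delta>"
      by (simp add: EK_kernel_def powr_add powr_realpow)
  qed simp
qed

lemma hausdorff_weight_EK_kernel:
  assumes "\<gamma> > -1" "\<delta> > 0"
  shows "hausdorff_weight (EK_kernel \<gamma> \<delta>)"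
  unfolding hausdorff_weight_def
proof
  show "EK_kernel \<gamma> \<delta> integrable_on {0..1}"
    using EK_kernel_power_has_integral[OF assms, of 0] by (simp add: has_integral_integrable)
  show "\<forall>t\<in>{0..1}. 0 \<le> EK_kernel \<gamma> \<delta> t"
    using assms by (simp add: EK_kernel_def)
qed

lemma moment_EK_kernel:
  "\<gamma> > -1 \<Longrightarrow> \<delta> > 0
    \<Longrightarrow> moment (EK_kernel \<gamma> \<delta>) m = Gamma (\<gamma> + real m + 1) / Gamma (\<gamma> + \<delta> + real m + 1)"
  unfolding moment_def by (rule integral_unique[OF EK_kernel_power_has_integral])

lemma hausdorff_op_EK_kernel_compose:
  assumes "\<gamma> > -1" "\<kappa> > 0" "\<delta> > 0" "continuous_on UNIV f"
  shows "hausdorff_op (EK_kernel \<gamma> \<kappa>) (hausdorff_op (EK_kernel (\<gamma> + \<kappa>) \<delta>) f)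
      = hausdorff_op (EK_kernel \<gamma> (\<kappa> + \<delta>)) f"
    and "hausdorff_op (EK_kernel (\<gamma> + \<kappa>) \<delta>) (hausdorff_op (EK_kernel \<gamma> \<kappa>) f)
      = hausdorff_op (EK_kernel \<gamma> (\<kappa> + \<delta>)) f"
proof -
  have weights: "hausdorff_weight (EK_kernel \<gamma> \<kappa>)" "hausdorff_weight (EK_kernel (\<gamma> + \<kappa>) \<delta>)"
    "hausdorff_weight (EK_kernel \<gamma> (\<kappa> + \<delta>))"
    using assms by (auto intro!: hausdorff_weight_EK_kernel)
  have moments: "moment (EK_kernel \<gamma> \<kappa>) j * moment (EK_kernel (\<gamma> + \<kappa>) \<delta>) j
      = moment (EK_kernel \<gamma> (\<kappa> + \<delta>)) j" for j
  proof -
    have "Gamma (1 + (\<gamma> + (\<kappa> + real j))) \<noteq> 0"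
      using Gamma_real_pos[of "1 + (\<gamma> + (\<kappa> + real j))"] assms by force
    with assms show ?thesis
      by (simp add: moment_EK_kernel add_ac)
  qed
  show "hausdorff_op (EK_kernel \<gamma> \<kappa>) (hausdorff_op (EK_kernel (\<gamma> + \<kappa>) \<delta>) f)
      = hausdorff_op (EK_kernel \<gamma> (\<kappa> + \<delta>)) f"
    by (rule hausdorff_op_compose_eq[OF weights moments assms(4)])
  show "hausdorff_op (EK_kernel (\<gamma> + \<kappa>) \<delta>) (hausdorff_op (EK_kernel \<gamma> \<kappa>) f)
      = hausdorff_op (EK_kernel \<gamma> (\<kappa> + \<delta>)) f"
    using moments
    by (intro hausdorff_op_compose_eq[OF weights(2,1,3) _ assms(4)]) (simp add: mult.commute)
qed

lemma EK_kernel_eq_taylor_kernel: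
  "t \<in> {0..1} - {0, 1} \<Longrightarrow> EK_kernel 0 (real (Suc m)) t = taylor_kernel m t"
  using Gamma_fact[of m] by (simp add: EK_kernel_def taylor_kernel_def powr_realpow)

lemma hausdorff_op_EK_kernel_Suc:
  "hausdorff_op (EK_kernel 0 (real (Suc m))) f = hausdorff_op (taylor_kernel m) f"
  unfolding hausdorff_op_def
  by (intro ext integral_spike[of "{0, 1}"]) (simp_all add: EK_kernel_eq_taylor_kernel del: of_nat_Suc)

definition seminorm_balls :: "(real \<Rightarrow> real) set set" where
  "seminorm_balls = {{g \<in> Cinf. seminorm_na n a (\<lambda>x. g x - f x) < e} | f n a e.
     f \<in> Cinf \<and> a > 0 \<and> e > 0}"

lemma Ctop_eq: "Ctop = subtopology (topology_generated_by seminorm_balls) Cinf"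
  unfolding Ctop_def seminorm_balls_def ..

lemma Cinf_subset_Union_seminorm_balls: "Cinf \<subseteq> \<Union>seminorm_balls"
proof
  fix f assume "f \<in> Cinf"
  then have "{g \<in> Cinf. seminorm_na 0 1 (\<lambda>x. g x - f x) < 1} \<in> seminorm_balls"
    unfolding seminorm_balls_def mem_Collect_eq
    by (intro exI[of _ f] exI[of _ "0::nat"] exI[of _ "1::real"] exI[of _ "1::real"]) auto
  moreover have "f \<in> {g \<in> Cinf. seminorm_na 0 1 (\<lambda>x. g x - f x) < 1}"
    using \<open>f \<in> Cinf\<close> by (simp add: seminorm_na_zero)
  ultimately show "f \<in> \<Union>seminorm_balls"
    by blast
qed

lemma topspace_Ctop: "topspace Ctop = Cinf"
  unfolding Ctop_eq using Cinf_subset_Union_seminorm_balls by auto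

lemma openin_Ctop_seminorm_ball:
  assumes "f \<in> Cinf" "a > 0" "e > 0"
  shows "openin Ctop {g \<in> Cinf. seminorm_na n a (\<lambda>x. g x - f x) < e}"
proof -
  have "{g \<in> Cinf. seminorm_na n a (\<lambda>x. g x - f x) < e} \<in> seminorm_balls"
    unfolding seminorm_balls_def using assms by blast
  then show ?thesis
    unfolding Ctop_eq openin_subtopology by (blast intro: topology_generated_by_Basis)
qed

locale seminorm_bounded_linear =
  fixes L :: "(real \<Rightarrow> real) \<Rightarrow> (real \<Rightarrow> real)"
  assumes maps_Cinf: "f \<in> Cinf \<Longrightarrow> L f \<in> Cinf"
    and diff: "f \<in> Cinf \<Longrightarrow> g \<in> Cinf \<Longrightarrow> L (\<lambda>x. f x - g x) = (\<lambda>x. L f x - L g x)"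
    and seminorm_bound: "a > 0 \<Longrightarrow> \<exists>N b C. b > 0 \<and> C > 0
      \<and> (\<forall>f\<in>Cinf. seminorm_na n a (L f) \<le> C * seminorm_na N b f)"
begin

lemma openin_preimage_seminorm_ball:
  assumes "f0 \<in> Cinf" "a > 0"
  shows "openin Ctop {h \<in> Cinf. seminorm_na n a (\<lambda>x. L h x - f0 x) < e}"
proof (rule openin_subopen[THEN iffD2], intro ballI)
  let ?V = "{h \<in> Cinf. seminorm_na n a (\<lambda>x. L h x - f0 x) < e}"
  fix h assume "h \<in> ?V"
  then have h: "h \<in> Cinf" and "seminorm_na n a (\<lambda>x. L h x - f0 x) < e"
    by auto
  obtain N b C where "b > 0" "C > 0"
    and bound: "\<And>f. f \<in> Cinf \<Longrightarrow> seminorm_na n a (L f) \<le> C * seminorm_na N b f"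
    using seminorm_bound[OF \<open>a > 0\<close>] by blast
  define r where "r = (e - seminorm_na n a (\<lambda>x. L h x - f0 x)) / C"
  have "r > 0"
    unfolding r_def using \<open>seminorm_na n a (\<lambda>x. L h x - f0 x) < e\<close> \<open>C > 0\<close> by simp
  have "g \<in> ?V" if g: "g \<in> Cinf" "seminorm_na N b (\<lambda>x. g x - h x) < r" for g
  proof -
    have "seminorm_na n a (\<lambda>x. L g x - f0 x)
        \<le> seminorm_na n a (\<lambda>x. L g x - L h x) + seminorm_na n a (\<lambda>x. L h x - f0 x)"
      using \<open>a > 0\<close> by (intro seminorm_na_triangle maps_Cinf g h assms(1)) auto
    also have "seminorm_na n a (\<lambda>x. L g x - L h x) \<le> C * seminorm_na N b (\<lambda>x. g x - h x)"
      using bound[OF Cinf_diff[OF g(1) h]] by (simp only: diff[OF g(1) h])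
    also have "C * seminorm_na N b (\<lambda>x. g x - h x) < C * r"
      using g(2) \<open>C > 0\<close> by simp
    finally show "g \<in> ?V"
      using g(1) \<open>C > 0\<close> by (simp add: r_def)
  qed
  moreover have "h \<in> {g \<in> Cinf. seminorm_na N b (\<lambda>x. g x - h x) < r}"
    using h \<open>b > 0\<close> \<open>r > 0\<close> by (simp add: seminorm_na_zero)
  ultimately show "\<exists>T. openin Ctop T \<and> h \<in> T \<and> T \<subseteq> ?V"
    using openin_Ctop_seminorm_ball[OF h \<open>b > 0\<close> \<open>r > 0\<close>] by blast
qed

lemma continuous_map_Ctop: "continuous_map Ctop Ctop L"
proof -
  have "continuous_map Ctop (topology_generated_by seminorm_balls) L"
  proof (rule continuous_on_generated_topo)
    show "L ` topspace Ctop \<subseteq> \<Union>seminorm_balls"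
      using maps_Cinf Cinf_subset_Union_seminorm_balls by (auto simp: topspace_Ctop)
    fix U assume "U \<in> seminorm_balls"
    then obtain f0 n a e where U: "U = {g \<in> Cinf. seminorm_na n a (\<lambda>x. g x - f0 x) < e}"
      and "f0 \<in> Cinf" "a > 0"
      unfolding seminorm_balls_def by blast
    have "L -` U \<inter> topspace Ctop = {h \<in> Cinf. seminorm_na n a (\<lambda>x. L h x - f0 x) < e}"
      unfolding U topspace_Ctop using maps_Cinf by auto
    then show "openin Ctop (L -` U \<inter> topspace Ctop)"
      using openin_preimage_seminorm_ball[OF \<open>f0 \<in> Cinf\<close> \<open>a > 0\<close>] by simp
  qed
  moreover have "L \<in> topspace Ctop \<rightarrow> Cinf"
    using maps_Cinf by (auto simp: topspace_Ctop)
  ultimately have "continuous_map Ctop (subtopology (topology_generated_by seminorm_balls) Cinf) L"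
    by (simp only: continuous_map_in_subtopology)
  then show ?thesis
    by (simp only: Ctop_eq[symmetric])
qed

end

lemma continuous_map_hausdorff_op:
  assumes "hausdorff_weight w"
  shows "continuous_map Ctop Ctop (hausdorff_op w)"
proof (rule seminorm_bounded_linear.continuous_map_Ctop, unfold_locales)
  show "hausdorff_op w (\<lambda>x. f x - g x) = (\<lambda>x. hausdorff_op w f x - hausdorff_op w g x)"
    if "f \<in> Cinf" "g \<in> Cinf" for f g
    using that by (intro hausdorff_op_diff assms Cinf_continuous_on)
  fix n :: nat and a :: real assume "a > 0"
  define C where "C = integral {0..1} w + 1"
  have "C > 0"
    using hausdorff_weight_integral_nonneg[OF assms] by (simp add: C_def)
  moreover have "seminorm_na n a (hausdorff_op w f) \<le> C * seminorm_na n a f" if "f \<in> Cinf" for f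
    using seminorm_na_hausdorff_op_le[OF assms that, of a n]
      seminorm_na_nonneg[OF that, of a n] \<open>a > 0\<close>
    by (simp add: C_def algebra_simps)
  ultimately show "\<exists>N b C. b > 0 \<and> C > 0 \<and> (\<forall>f\<in>Cinf. seminorm_na n a (hausdorff_op w f)
      \<le> C * seminorm_na N b f)"
    using \<open>a > 0\<close> by blast
qed (rule hausdorff_op_Cinf[OF assms])

lemma continuous_map_Dop: "continuous_map Ctop Ctop (Dop j)"
proof (rule seminorm_bounded_linear.continuous_map_Ctop, unfold_locales)
  fix n :: nat and a :: real assume "a > 0"
  then show "\<exists>N b C. b > 0 \<and> C > 0
      \<and> (\<forall>f\<in>Cinf. seminorm_na n a (Dop j f) \<le> C * seminorm_na N b f)"
    using seminorm_na_Dop_le[of _ a n j] by (intro exI[of _ "Suc n"] exI[of _ a]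
        exI[of _ "real j + real n + a"]) auto
qed (simp_all add: Dop_Cinf Dop_diff)

lemma continuous_map_Dprod: "continuous_map Ctop Ctop (Dprod m)"
proof (induction m)
  case 0
  then show ?case
    using continuous_map_id by (simp add: id_def)
next
  case (Suc m)
  have "Dprod (Suc m) = Dop (Suc m) \<circ> Dprod m"
    by auto
  then show ?case
    by (simp only: continuous_map_compose[OF Suc.IH continuous_map_Dop])
qed

lemma EK_zero [simp]: "EK \<gamma> 0 f = f"
  by (simp add: EK_def)

lemma EK_Cinf: "\<gamma> > -1 \<Longrightarrow> \<delta> \<ge> 0 \<Longrightarrow> f \<in> Cinf \<Longrightarrow> EK \<gamma> \<delta> f \<in> Cinf"
  by (cases "\<delta> = 0") (simp_all add: EK_eq_hausdorff_op hausdorff_op_Cinf hausdorff_weight_EK_kernel)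

lemma continuous_map_EK:
  assumes "\<gamma> > -1" "\<delta> \<ge> 0"
  shows "continuous_map Ctop Ctop (EK \<gamma> \<delta>)"
proof (cases "\<delta> = 0")
  case True
  then have "EK \<gamma> \<delta> = id"
    by auto
  then show ?thesis
    by simp
next
  case False
  then have "EK \<gamma> \<delta> = hausdorff_op (EK_kernel \<gamma> \<delta>)"
    by (intro ext EK_eq_hausdorff_op)
  with assms False show ?thesis
    by (simp add: continuous_map_hausdorff_op hausdorff_weight_EK_kernel)
qed

lemma chi_EK_eq_taylor:
  assumes "\<kappa> > 0" "\<kappa> \<le> real (Suc m)" "continuous_on UNIV f"
  shows "chi \<kappa> (EK \<kappa> (real (Suc m) - \<kappa>) f) = hausdorff_op (taylor_kernel m) f"
    and "EK \<kappa> (real (Suc m) - \<kappa>) (chi \<kappa> f) = hausdorff_op (taylor_kernel m) f"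
proof -
  have "chi \<kappa> (EK \<kappa> (real (Suc m) - \<kappa>) f) = hausdorff_op (EK_kernel 0 (real (Suc m))) f
    \<and> EK \<kappa> (real (Suc m) - \<kappa>) (chi \<kappa> f) = hausdorff_op (EK_kernel 0 (real (Suc m))) f"
  proof (cases "\<kappa> = real (Suc m)")
    case True
    then show ?thesis
      by (simp add: chi_eq_hausdorff_op)
  next
    case False
    then have "real (Suc m) - \<kappa> > 0"
      using assms(2) by simp
    with hausdorff_op_EK_kernel_compose[of 0 \<kappa> "real (Suc m) - \<kappa>", OF _ assms(1) _ assms(3)]
    show ?thesis
      by (simp add: chi_eq_hausdorff_op EK_eq_hausdorff_op)
  qed
  then show "chi \<kappa> (EK \<kappa> (real (Suc m) - \<kappa>) f) = hausdorff_op (taylor_kernel m) f"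
    and "EK \<kappa> (real (Suc m) - \<kappa>) (chi \<kappa> f) = hausdorff_op (taylor_kernel m) f"
    by (simp_all only: hausdorff_op_EK_kernel_Suc)
qed

lemma Dprod_EK_chi:
  assumes "\<kappa> > 0" "\<kappa> \<le> real n" "f \<in> Cinf"
  shows "Dprod n (EK \<kappa> (real n - \<kappa>) (chi \<kappa> f)) = f"
proof -
  obtain m where n: "n = Suc m"
    using assms(1,2) by (cases n) auto
  have "Dprod n (EK \<kappa> (real n - \<kappa>) (chi \<kappa> f)) = Dprod n (hausdorff_op (taylor_kernel m) f)"
    using chi_EK_eq_taylor(2)[OF assms(1) _ Cinf_continuous_on[OF assms(3)], of m] assms(2)
    unfolding n by simp
  also have "\<dots> = f"
    unfolding n by (rule Dprod_hausdorff_op_taylor_kernel[OF assms(3)])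
  finally show ?thesis .
qed

lemma chi_Dprod_EK:
  assumes "\<kappa> > 0" "\<kappa> \<le> real n" "f \<in> Cinf"
  shows "chi \<kappa> (Dprod n (EK \<kappa> (real n - \<kappa>) f)) = f"
proof -
  obtain m where n: "n = Suc m"
    using assms(1,2) by (cases n) auto
  have "chi \<kappa> (Dprod n (EK \<kappa> (real n - \<kappa>) f)) = Dprod n (chi \<kappa> (EK \<kappa> (real n - \<kappa>) f))"
    using assms
    by (simp add: chi_eq_hausdorff_op hausdorff_op_Dprod hausdorff_weight_EK_kernel EK_Cinf)
  also have "\<dots> = Dprod n (hausdorff_op (taylor_kernel m) f)"
    using chi_EK_eq_taylor(1)[OF assms(1) _ Cinf_continuous_on[OF assms(3)], of m] assms(2)
    unfolding n by simp
  also have "\<dots> = f"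
    unfolding n by (rule Dprod_hausdorff_op_taylor_kernel[OF assms(3)])
  finally show ?thesis .
qed

lemma continuous_map_chi: "\<kappa> > 0 \<Longrightarrow> continuous_map Ctop Ctop (chi \<kappa>)"
  using continuous_map_hausdorff_op[OF hausdorff_weight_EK_kernel, of 0 \<kappa>]
  by (simp add: chi_eq_hausdorff_op[abs_def])

lemma homeomorphic_maps_chi:
  assumes "\<kappa> > 0" "\<kappa> \<le> real n"
  shows "homeomorphic_maps Ctop Ctop (chi \<kappa>) (Dprod n \<circ> EK \<kappa> (real n - \<kappa>))"
  unfolding homeomorphic_maps_def topspace_Ctop
  using assms continuous_map_chi[OF assms(1)]
    continuous_map_compose[OF continuous_map_EK continuous_map_Dprod, of \<kappa> "real n - \<kappa>" n]
  by (auto simp: Dprod_EK_chi chi_Dprod_EK)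

lemma chi_add: "\<kappa> > 0 \<Longrightarrow> f \<in> Cinf \<Longrightarrow> g \<in> Cinf
    \<Longrightarrow> chi \<kappa> (\<lambda>x. f x + g x) = (\<lambda>x. chi \<kappa> f x + chi \<kappa> g x)"
  by (simp add: chi_eq_hausdorff_op hausdorff_op_add hausdorff_weight_EK_kernel Cinf_continuous_on)

lemma chi_cmult: "chi \<kappa> (\<lambda>x. c * f x) = (\<lambda>x. c * chi \<kappa> f x)"
  by (simp add: chi_eq_hausdorff_op hausdorff_op_cmult)

theorem theorem5p3:
  fixes \<kappa> :: real and n :: nat
  assumes "\<kappa> > 0" and "n = nat \<lceil>\<kappa>\<rceil>"
  shows "(\<forall>f \<in> Cinf. \<forall>g \<in> Cinf. \<forall>c :: real.
            chi \<kappa> (\<lambda>x. f x + g x) = (\<lambda>x. chi \<kappa> f x + chi \<kappa> g x) \<and>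
            chi \<kappa> (\<lambda>x. c * f x) = (\<lambda>x. c * chi \<kappa> f x))
       \<and> homeomorphic_map Ctop Ctop (chi \<kappa>)
       \<and> (\<forall>f \<in> Cinf. inv_into Cinf (chi \<kappa>) f = Dprod n (EK \<kappa> (real n - \<kappa>) f))"
proof -
  have n: "\<kappa> \<le> real n"
    using assms(2) real_nat_ceiling_ge by simp
  have "inv_into Cinf (chi \<kappa>) f = Dprod n (EK \<kappa> (real n - \<kappa>) f)" if "f \<in> Cinf" for f
    using that assms(1) n
    by (intro inv_into_f_eq inj_on_inverseI[of _ "Dprod n \<circ> EK \<kappa> (real n - \<kappa>)"])
      (auto simp: Dprod_EK_chi chi_Dprod_EK Dprod_Cinf EK_Cinf)
  with homeomorphic_maps_imp_map[OF homeomorphic_maps_chi[OF assms(1) n]] show ?thesis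
    by (simp add: chi_add chi_cmult assms(1))
qed
end
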